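(* Let $\mathcal{X}\subseteq\{0,1\}^n$ be a nonempty set of feasible solutions, let $\hat c\in\mathbb{R}^n_{\ge 0}$ be the nominal cost vector, and for $\lambda\in\Lambda\subseteq[0,1]$ let $\mathcal{U}(\lambda)=\prod_{i=1}^n[(1-\lambda)\hat c_i,(1+\lambda)\hat c_i]$. Let $w:\Lambda\to\mathbb{R}_{\ge 0}$ be a weight function such that \[ val(x)=\int_\Lambda w(\lambda)\Big(\max_{c\in\mathcal{U}(\lambda)} c^t x\Big)\,d\lambda \] is well-defined (finite) for all $x\in\mathcal{X}$. Then any nominal solution $\hat x$, i.e. any minimizer of $\hat c^t x$ over $x\in\mathcal{X}$, is an optimal solution of the problem $\min_{x\in\mathcal{X}} val(x)$.
   Context: This is the "compromise approach to variable-sized uncertainty" for min-max robust combinatorial optimization: the nominal problem is $\min\{c^tx : x\in\mathcal{X}\}$, the uncertainty set $\mathcal{U}(\lambda)$ has known shape but unknown size $\lambda$, and one seeks a single solution minimizing the $w$-weighted integral over $\lambda$ of the worst-case objective. *)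

theory Defs
  imports "HOL-Analysis.Analysis"
begin

definition unc_set :: "real^'n \<Rightarrow> real \<Rightarrow> (real^'n) set" where
  "unc_set ch l = {c. \<forall>i. (1 - l) * ch$i \<le> c$i \<and> c$i \<le> (1 + l) * ch$i}"

text \<open>Worst-case objective max over c in U(lambda) of c^t x (the set is compact and nonempty, so Sup is the max).\<close>
definition worst_case :: "real^'n \<Rightarrow> real \<Rightarrow> real^'n \<Rightarrow> real" where
  "worst_case ch l x = Sup ((\<lambda>c. c \<bullet> x) ` unc_set ch l)"

definition val :: "real set \<Rightarrow> (real \<Rightarrow> real) \<Rightarrow> real^'n \<Rightarrow> real^'n \<Rightarrow> real" where
  "val Lam w ch x = (LINT l:Lam|lborel. w l * worst_case ch l x)"

end

theory Submission
  imports Defs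
begin

text \<open>For a nonnegative cost vector and a nonnegative solution the worst case over the box
  of size \<open>\<lambda>\<close> is attained at its upper corner \<open>(1 + \<lambda>) ch\<close>, so it is the nominal
  objective scaled by \<open>1 + \<lambda>\<close>. Hence the nominal minimizer minimizes every
  integrand of \<open>val\<close> simultaneously, and integration against a nonnegative weight
  preserves this.\<close>

lemma inner_le_upper_corner:
  fixes ch x c :: "real^'n"
  assumes "\<forall>i. x$i \<ge> 0" and "c \<in> unc_set ch l"
  shows "c \<bullet> x \<le> ((1 + l) *\<^sub>R ch) \<bullet> x"
proof -
  have "c \<bullet> x = (\<Sum>i\<in>UNIV. c$i * x$i)" by (simp add: inner_vec_def)
  also have "\<dots> \<le> (\<Sum>i\<in>UNIV. ((1 + l) * ch$i) * x$i)"
    using assms unfolding unc_set_def by (intro sum_mono mult_right_mono) auto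
  also have "\<dots> = ((1 + l) *\<^sub>R ch) \<bullet> x" by (simp add: inner_vec_def)
  finally show ?thesis .
qed

lemma worst_case_eq_scaled_nominal:
  fixes ch x :: "real^'n"
  assumes "\<forall>i. x$i \<ge> 0" and "\<forall>i. ch$i \<ge> 0" and "0 \<le> l"
  shows "worst_case ch l x = (1 + l) * (ch \<bullet> x)"
proof -
  have corner: "(1 + l) *\<^sub>R ch \<in> unc_set ch l"
    unfolding unc_set_def using assms(2,3) by (auto simp: mult_right_mono)
  have "worst_case ch l x = ((1 + l) *\<^sub>R ch) \<bullet> x"
    unfolding worst_case_def
  proof (rule cSup_eq_maximum)
    show "((1 + l) *\<^sub>R ch) \<bullet> x \<in> (\<lambda>c. c \<bullet> x) ` unc_set ch l"
      using corner by (rule imageI)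
  qed (use inner_le_upper_corner[OF assms(1)] in auto)
  then show ?thesis by simp
qed

lemma worst_case_mono_nominal:
  fixes ch x y :: "real^'n"
  assumes "\<forall>i. x$i \<ge> 0" and "\<forall>i. y$i \<ge> 0" and "\<forall>i. ch$i \<ge> 0" and "0 \<le> l"
    and "ch \<bullet> x \<le> ch \<bullet> y"
  shows "worst_case ch l x \<le> worst_case ch l y"
  using assms by (simp add: worst_case_eq_scaled_nominal mult_left_mono)

theorem theorem1:
  fixes X :: "(real^'n) set" and ch xh :: "real^'n"
    and Lam :: "real set" and w :: "real \<Rightarrow> real"
  assumes "X \<noteq> {}"
    and binary: "\<forall>x\<in>X. \<forall>i. x$i = 0 \<or> x$i = 1"
    and ch_nonneg: "\<forall>i. ch$i \<ge> 0"
    and Lam: "Lam \<subseteq> {0..1}"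
    and w_nonneg: "\<forall>l\<in>Lam. w l \<ge> 0"
    and integrable: "\<forall>x\<in>X. set_integrable lborel Lam (\<lambda>l. w l * worst_case ch l x)"
    and xh: "xh \<in> X"
    and nominal_opt: "\<forall>x\<in>X. ch \<bullet> xh \<le> ch \<bullet> x"
  shows "\<forall>x\<in>X. val Lam w ch xh \<le> val Lam w ch x"
proof
  fix x assume x: "x \<in> X"
  have nonneg: "\<forall>i. y$i \<ge> 0" if "y \<in> X" for y
    using binary that by (metis order_refl zero_le_one)
  have "w l * worst_case ch l xh \<le> w l * worst_case ch l x" if "l \<in> Lam" for l
    using that Lam w_nonneg nominal_opt x xh
    by (intro mult_left_mono worst_case_mono_nominal nonneg ch_nonneg) auto
  then show "val Lam w ch xh \<le> val Lam w ch x"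
    unfolding val_def using integrable x xh by (intro set_integral_mono) auto
qed

end
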